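(* Let $t_0\in\mathbb R$, $N\in\mathbb N^*$ and $G\in\mathcal A_N([t_0,\infty[)$. Then $$\sup_{t\ge t_0}\Big\{\Big|\int_{t_0}^t\cos(2s)G(s)\,ds\Big|,\ \Big|\int_{t_0}^t\sin(2s)G(s)\,ds\Big|\Big\}<\infty.$$
   Context: For $N\in\mathbb N^*$, $\mathcal A_N([t_0,\infty[)$ is the class of $C^N$ functions $G$ on $[t_0,\infty[$ such that $G^{(N)}\in L^1([t_0,\infty[)$ and $G^{(j)}(t)\to0$ as $t\to\infty$ for $0\le j\le N-1$. *)

theory Defs
  imports "HOL-Analysis.Analysis"
begin

definition class_A :: "nat \<Rightarrow> real \<Rightarrow> (real \<Rightarrow> real) \<Rightarrow> bool" where
  "class_A N t0 G \<longleftrightarrow>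
     (\<exists>D :: nat \<Rightarrow> real \<Rightarrow> real.
        (\<forall>t\<in>{t0..}. D 0 t = G t) \<and>
        (\<forall>j<N. \<forall>t\<in>{t0..}. (D j has_real_derivative D (Suc j) t) (at t within {t0..})) \<and>
        continuous_on {t0..} (D N) \<and>
        D N absolutely_integrable_on {t0..} \<and>
        (\<forall>j<N. (D j \<longlongrightarrow> 0) at_top))"

end

theory Submission
  imports Defs
begin

text \<open>Integrating by parts against \<open>sin (2s)/2\<close> and \<open>-cos (2s)/2\<close> bounds the oscillatory
  integrals of \<open>G^(j)\<close> by half those of \<open>G^(j+1)\<close> plus boundary terms, which stay bounded
  because \<open>G^(j)\<close> is continuous and tends to 0. Descending from \<open>j = N\<close>, where the integrals
  are bounded by \<open>\<integral>|G^(N)|\<close>, reaches \<open>j = 0\<close>.\<close>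

definition trig_integrals_bounded :: "real \<Rightarrow> (real \<Rightarrow> real) \<Rightarrow> bool" where
  "trig_integrals_bounded t0 f \<longleftrightarrow>
     (\<exists>M. \<forall>t\<ge>t0. \<bar>integral {t0..t} (\<lambda>s. cos (2 * s) * f s)\<bar> \<le> M \<and>
                 \<bar>integral {t0..t} (\<lambda>s. sin (2 * s) * f s)\<bar> \<le> M)"

lemma continuous_on_atLeast_tendsto_imp_bounded:
  fixes f :: "real \<Rightarrow> 'a::real_normed_vector"
  assumes cont: "continuous_on {t0..} f" and lim: "(f \<longlongrightarrow> l) at_top"
  shows "\<exists>B. \<forall>t\<ge>t0. norm (f t) \<le> B"
proof -
  from lim have "\<forall>\<^sub>F t in at_top. dist (f t) l < 1" by (simp add: tendsto_iff)
  then obtain T where T: "\<And>t. t \<ge> T \<Longrightarrow> norm (f t) < norm l + 1"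
    unfolding eventually_at_top_linorder dist_norm by (metis norm_triangle_sub add.commute
        add_strict_left_mono le_less_trans norm_minus_commute order_less_imp_le)
  have "compact (f ` {t0..max T t0})"
    by (rule compact_continuous_image) (auto intro: continuous_on_subset[OF cont])
  then obtain B where B: "\<And>y. y \<in> f ` {t0..max T t0} \<Longrightarrow> norm y \<le> B"
    using compact_imp_bounded bounded_iff by metis
  have "norm (f t) \<le> max B (norm l + 1)" if "t \<ge> t0" for t
    using B[of "f t"] T[of t] that by (cases "t \<le> max T t0") force+
  then show ?thesis by blast
qed

lemma abs_integral_mult_le_integral_abs:
  fixes f g :: "real \<Rightarrow> real"
  assumes f: "continuous_on {a..} f" "f absolutely_integrable_on {a..}"
    and g: "continuous_on {a..b} g" "\<And>s. \<bar>g s\<bar> \<le> 1"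
  shows "\<bar>integral {a..b} (\<lambda>s. g s * f s)\<bar> \<le> integral {a..} (\<lambda>s. \<bar>f s\<bar>)"
proof -
  have cont_ab: "continuous_on {a..b} f" by (rule continuous_on_subset[OF f(1)]) auto
  have int: "(\<lambda>s. g s * f s) integrable_on {a..b}" "(\<lambda>s. \<bar>f s\<bar>) integrable_on {a..b}"
    by (auto intro!: integrable_continuous_interval continuous_intros cont_ab g(1))
  have "norm (g s * f s) \<le> \<bar>f s\<bar>" for s
    using g(2)[of s] by (simp add: abs_mult mult_left_le_one_le)
  then have "\<bar>integral {a..b} (\<lambda>s. g s * f s)\<bar> \<le> integral {a..b} (\<lambda>s. \<bar>f s\<bar>)"
    using integral_norm_bound_integral[OF int] by simp
  also have "\<dots> \<le> integral {a..} (\<lambda>s. \<bar>f s\<bar>)"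
    using f(2) by (intro integral_subset_le integrable_continuous_interval continuous_intros
        cont_ab) (auto simp: absolutely_integrable_on_def)
  finally show ?thesis .
qed

lemma trig_integrals_bounded_if_absolutely_integrable:
  assumes "continuous_on {t0..} f" "f absolutely_integrable_on {t0..}"
  shows "trig_integrals_bounded t0 f"
  unfolding trig_integrals_bounded_def
  using abs_integral_mult_le_integral_abs[OF assms, of _ "\<lambda>s. cos (2 * s)"]
    abs_integral_mult_le_integral_abs[OF assms, of _ "\<lambda>s. sin (2 * s)"]
  by (intro exI[of _ "integral {t0..} (\<lambda>s. \<bar>f s\<bar>)"]) (simp add: continuous_intros)

lemma integral_by_parts_real:
  fixes u u' f f' :: "real \<Rightarrow> real"
  assumes "a \<le> b"
    and u: "\<And>x. x \<in> {a..b} \<Longrightarrow> (u has_real_derivative u' x) (at x within {a..b})"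
    and f: "\<And>x. x \<in> {a..b} \<Longrightarrow> (f has_real_derivative f' x) (at x within {a..b})"
    and cont: "continuous_on {a..b} u'" "continuous_on {a..b} f'"
  shows "integral {a..b} (\<lambda>s. u' s * f s) = u b * f b - u a * f a - integral {a..b} (\<lambda>s. u s * f' s)"
proof -
  have "continuous_on {a..b} u" "continuous_on {a..b} f"
    using DERIV_continuous_on[OF u] DERIV_continuous_on[OF f] by auto
  then have int: "(\<lambda>s. u' s * f s) integrable_on {a..b}" "(\<lambda>s. u s * f' s) integrable_on {a..b}"
    by (auto intro!: integrable_continuous_interval continuous_intros cont)
  have "((\<lambda>s. u' s * f s + u s * f' s) has_integral u b * f b - u a * f a) {a..b}"
    using \<open>a \<le> b\<close> u f
    by (intro fundamental_theorem_of_calculus)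
       (auto intro!: derivative_eq_intros simp: has_real_derivative_iff_has_vector_derivative[symmetric])
  then show ?thesis
    using integral_add[OF int] by (simp add: integral_unique)
qed

lemma trig_integrals_bounded_if_derivative:
  assumes deriv: "\<And>t. t \<ge> t0 \<Longrightarrow> (f has_real_derivative f' t) (at t within {t0..})"
    and cont: "continuous_on {t0..} f'"
    and bounded: "\<And>t. t \<ge> t0 \<Longrightarrow> \<bar>f t\<bar> \<le> B"
    and "trig_integrals_bounded t0 f'"
  shows "trig_integrals_bounded t0 f"
proof -
  obtain M where M: "\<And>t. t \<ge> t0 \<Longrightarrow> \<bar>integral {t0..t} (\<lambda>s. cos (2 * s) * f' s)\<bar> \<le> M \<and>
                              \<bar>integral {t0..t} (\<lambda>s. sin (2 * s) * f' s)\<bar> \<le> M"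
    using \<open>trig_integrals_bounded t0 f'\<close> unfolding trig_integrals_bounded_def by blast
  have boundary: "\<bar>w x / 2 * f x\<bar> \<le> B / 2" if "x \<ge> t0" "\<bar>w x\<bar> \<le> 1" for w :: "real \<Rightarrow> real" and x
    using mult_mono[OF that(2) bounded[OF that(1)]] by (simp add: abs_mult)
  have "\<bar>integral {t0..t} (\<lambda>s. cos (2 * s) * f s)\<bar> \<le> B + M \<and>
        \<bar>integral {t0..t} (\<lambda>s. sin (2 * s) * f s)\<bar> \<le> B + M" if t: "t \<ge> t0" for t
  proof -
    have f: "(f has_real_derivative f' x) (at x within {t0..t})" if "x \<in> {t0..t}" for x
      using that by (intro DERIV_subset[OF deriv]) auto
    have cont_t: "continuous_on {t0..t} f'" by (rule continuous_on_subset[OF cont]) auto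
    have sin_deriv: "((\<lambda>s. sin (2 * s) / 2) has_real_derivative cos (2 * x)) (at x within S)"
      and cos_deriv: "((\<lambda>s. - cos (2 * s) / 2) has_real_derivative sin (2 * x)) (at x within S)"
      for x S by (auto intro!: derivative_eq_intros)
    have trig_cont: "continuous_on S (\<lambda>s. cos (2 * s))" "continuous_on S (\<lambda>s. sin (2 * s))"
      for S :: "real set" by (intro continuous_intros)+
    have "integral {t0..t} (\<lambda>s. cos (2 * s) * f s) =
        sin (2 * t) / 2 * f t - sin (2 * t0) / 2 * f t0 - integral {t0..t} (\<lambda>s. sin (2 * s) * f' s) / 2"
      using integral_by_parts_real[OF t sin_deriv f trig_cont(1) cont_t] by simp
    moreover have "integral {t0..t} (\<lambda>s. sin (2 * s) * f s) =
        - cos (2 * t) / 2 * f t + cos (2 * t0) / 2 * f t0 + integral {t0..t} (\<lambda>s. cos (2 * s) * f' s) / 2"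
      using integral_by_parts_real[OF t cos_deriv f trig_cont(2) cont_t] by simp
    moreover note boundary[of t "\<lambda>s. sin (2 * s)"] boundary[of t0 "\<lambda>s. sin (2 * s)"]
      boundary[of t "\<lambda>s. cos (2 * s)"] boundary[of t0 "\<lambda>s. cos (2 * s)"]
    ultimately show ?thesis using M[OF t] t by (auto simp: abs_le_iff)
  qed
  then show ?thesis unfolding trig_integrals_bounded_def by blast
qed

lemma trig_integrals_bounded_cong:
  assumes "\<And>t. t \<ge> t0 \<Longrightarrow> f t = g t"
  shows "trig_integrals_bounded t0 f \<longleftrightarrow> trig_integrals_bounded t0 g"
proof -
  have "integral {t0..t} (\<lambda>s. w s * f s) = integral {t0..t} (\<lambda>s. w s * g s)" for t w
    using assms by (intro integral_cong) auto
  then show ?thesis unfolding trig_integrals_bounded_def by presburger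
qed

lemma trig_integrals_bounded_iterated_derivatives:
  assumes deriv: "\<And>i t. i < N \<Longrightarrow> t \<ge> t0 \<Longrightarrow>
                    (D i has_real_derivative D (Suc i) t) (at t within {t0..})"
    and cont_N: "continuous_on {t0..} (D N)" and int_N: "D N absolutely_integrable_on {t0..}"
    and lim: "\<And>i. i < N \<Longrightarrow> (D i \<longlongrightarrow> 0) at_top"
    and "j \<le> N"
  shows "trig_integrals_bounded t0 (D j)"
proof -
  have cont: "continuous_on {t0..} (D i)" if "i \<le> N" for i
  proof (cases "i = N")
    case False
    with that have "i < N" by simp
    then show ?thesis
      using deriv by (intro DERIV_continuous_on[where D = "D (Suc i)"]) auto
  qed (use cont_N in simp)
  from \<open>j \<le> N\<close> show ?thesis
  proof (induction j rule: inc_induct)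
    case base
    show ?case using cont_N int_N by (rule trig_integrals_bounded_if_absolutely_integrable)
  next
    case (step i)
    then have "i < N" by simp
    with cont have "continuous_on {t0..} (D i)" by simp
    from continuous_on_atLeast_tendsto_imp_bounded[OF this lim[OF \<open>i < N\<close>]]
    obtain B where B: "\<forall>t\<ge>t0. norm (D i t) \<le> B" by blast
    show ?case
    proof (rule trig_integrals_bounded_if_derivative)
      show "(D i has_real_derivative D (Suc i) t) (at t within {t0..})" if "t \<ge> t0" for t
        using deriv \<open>i < N\<close> that by simp
      show "continuous_on {t0..} (D (Suc i))" using cont \<open>i < N\<close> by simp
      show "\<bar>D i t\<bar> \<le> B" if "t \<ge> t0" for t using B that by simp
    qed (rule step.IH)
  qed
qed

theorem lemma4p3:
  fixes t0 :: real and N :: nat and G :: "real \<Rightarrow> real"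
  assumes "N \<ge> 1" and "class_A N t0 G"
  shows "\<exists>M. \<forall>t\<ge>t0.
           abs (integral {t0..t} (\<lambda>s. cos (2 * s) * G s)) \<le> M \<and>
           abs (integral {t0..t} (\<lambda>s. sin (2 * s) * G s)) \<le> M"
proof -
  obtain D :: "nat \<Rightarrow> real \<Rightarrow> real" where
    D0: "\<forall>t\<in>{t0..}. D 0 t = G t" and
    deriv: "\<forall>j<N. \<forall>t\<in>{t0..}. (D j has_real_derivative D (Suc j) t) (at t within {t0..})" and
    cont_N: "continuous_on {t0..} (D N)" and
    int_N: "D N absolutely_integrable_on {t0..}" and
    lim: "\<forall>j<N. (D j \<longlongrightarrow> 0) at_top"
    using assms(2) unfolding class_A_def by blast
  have "trig_integrals_bounded t0 (D 0)"
    using deriv lim cont_N int_N by (intro trig_integrals_bounded_iterated_derivatives) auto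
  moreover have "trig_integrals_bounded t0 (D 0) \<longleftrightarrow> trig_integrals_bounded t0 G"
    using D0 by (intro trig_integrals_bounded_cong) simp
  ultimately show ?thesis unfolding trig_integrals_bounded_def by blast
qed

end
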